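(* Fix $n\ge1$, $p\in(0,1]$. Let $ALG$ be any $\gamma$-robust policy for the SP-UA. Then for every $U:[n]\to\mathbb R_+$ with $U_1\ge U_2\ge\cdots\ge U_n\ge0$, $\mathbb E[U(ALG)]\ge\gamma\,\mathbb E[U(OPT)]$. Moreover, \[ \gamma_n^*=\max_{ALG}\ \min\Big\{\frac{\mathbb E[U(ALG)]}{\mathbb E[U(OPT)]}:\ U:[n]\to\mathbb R_+,\ U\neq0,\ U_1\ge\cdots\ge U_n\ge0\Big\}, \] where the maximum is over policies for the SP-UA.
   Context: SP-UA model: fix $n\ge1$, $p\in(0,1]$; $n$ candidates with distinct overall ranks $1,\dots,n$ ($1$ best) arrive in uniformly random order; the decision maker sees only partial ranks (the rank of the current candidate among those arrived so far) and irrevocably decides (possibly randomly) to make an offer or pass; each candidate is independently willing to accept an offer with probability $p$, and the process stops when an offer is accepted. A policy collects a candidate of rank $i$ if it makes her an offer and she accepts. Robust ratio $\gamma_{\mathcal P}=\min_{k\in[n]}\Pr(\mathcal P\text{ collects a candidate with rank}\le k)/(1-(1-p)^k)$; $\gamma_n^*=\sup_{\mathcal P}\gamma_{\mathcal P}$; $\mathcal P$ is $\gamma$-robust if $\gamma\le\gamma_{\mathcal P}$. Given a utility $U$, $U(ALG)$ is $U_i$ if $ALG$ collects a candidate of overall rank $i$ and $0$ if it collects no one; $U(OPT)=U_{i^*}$ where $i^*$ is the best overall rank among candidates willing to accept (and $0$ if none is willing), so $\mathbb E[U(OPT)]=\sum_{i=1}^nU_ip(1-p)^{i-1}$. *)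

theory Defs
  imports Complex_Main "HOL-Combinatorics.Multiset_Permutations"
begin

(* An arrival sequence is a list xs of the overall ranks 1..n in arrival order
   (xs ranges uniformly over permutations_of_set {1..n}).
   A (behavioural, possibly randomised) policy is a function
     P :: nat list => bool list => real
   mapping the observed partial ranks r_1..r_t of the candidates arrived so far
   (including the current one) and the policy's own previous decisions
   d_1..d_{t-1} (True = offer made; any offer made was necessarily rejected,
   since the process is still running) to the probability of making an
   offer to the current (t-th) candidate. *)

type_synonym policy = "nat list \<Rightarrow> bool list \<Rightarrow> real"

definition valid_policy :: "policy \<Rightarrow> bool" where
  "valid_policy P \<longleftrightarrow> (\<forall>rs ds. 0 \<le> P rs ds \<and> P rs ds \<le> 1)"

definition partial_ranks :: "nat list \<Rightarrow> nat list" where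
  "partial_ranks seen =
     map (\<lambda>j. card {i. i \<le> j \<and> seen ! i \<le> seen ! j}) [0..<length seen]"

primrec run_value ::
  "policy \<Rightarrow> real \<Rightarrow> (nat \<Rightarrow> real) \<Rightarrow> nat list \<Rightarrow> bool list \<Rightarrow> nat list \<Rightarrow> real" where
  "run_value P p U seen ds [] = 0"
| "run_value P p U seen ds (x # rest) =
     (let seen' = seen @ [x]; q = P (partial_ranks seen') ds in
        q * (p * U x + (1 - p) * run_value P p U seen' (ds @ [True]) rest)
      + (1 - q) * run_value P p U seen' (ds @ [False]) rest)"

definition EU_alg :: "nat \<Rightarrow> real \<Rightarrow> policy \<Rightarrow> (nat \<Rightarrow> real) \<Rightarrow> real" where
  "EU_alg n p P U =
     (\<Sum>xs\<in>permutations_of_set {1..n}. run_value P p U [] [] xs)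
       / real (card (permutations_of_set {1..n}))"

definition EU_opt :: "nat \<Rightarrow> real \<Rightarrow> (nat \<Rightarrow> real) \<Rightarrow> real" where
  "EU_opt n p U = (\<Sum>i=1..n. U i * p * (1 - p) ^ (i - 1))"

definition prob_top :: "nat \<Rightarrow> real \<Rightarrow> policy \<Rightarrow> nat \<Rightarrow> real" where
  "prob_top n p P k = EU_alg n p P (\<lambda>i. if i \<le> k then 1 else 0)"

definition robust_ratio :: "nat \<Rightarrow> real \<Rightarrow> policy \<Rightarrow> real" where
  "robust_ratio n p P = Min ((\<lambda>k. prob_top n p P k / (1 - (1 - p) ^ k)) ` {1..n})"

definition gamma_star :: "nat \<Rightarrow> real \<Rightarrow> real" where
  "gamma_star n p = (SUP P\<in>{P. valid_policy P}. robust_ratio n p P)"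

definition monotone_utility :: "nat \<Rightarrow> (nat \<Rightarrow> real) \<Rightarrow> bool" where
  "monotone_utility n U \<longleftrightarrow>
     (\<forall>i j. 1 \<le> i \<longrightarrow> i \<le> j \<longrightarrow> j \<le> n \<longrightarrow> U j \<le> U i) \<and> (\<forall>i\<in>{1..n}. 0 \<le> U i)"

definition worst_utility_ratio :: "nat \<Rightarrow> real \<Rightarrow> policy \<Rightarrow> real" where
  "worst_utility_ratio n p P =
     (INF U\<in>{U. monotone_utility n U \<and> (\<exists>i\<in>{1..n}. U i \<noteq> 0)}.
        EU_alg n p P U / EU_opt n p U)"

end

theory Submission
  imports Defs "HOL-Analysis.Analysis"
begin

text \<open>
  Both expected utilities are linear in the utility U, and a monotone utility is a nonnegative
  combination of the threshold utilities [i \<le> k], for which E[U(ALG)] and E[U(OPT)] are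
  Pr(ALG collects rank \<le> k) and 1 - (1 - p)^k. So the worst utility ratio of a policy is
  attained at a threshold utility and equals its robust ratio. The robust ratio is continuous
  in the offer probabilities, which range over a compact product of unit intervals, hence some
  policy attains the supremum defining gamma_star.
\<close>

definition threshold_utility :: "nat \<Rightarrow> nat \<Rightarrow> real" where
  "threshold_utility k i = (if i \<le> k then 1 else 0)"

definition utility_step :: "nat \<Rightarrow> (nat \<Rightarrow> real) \<Rightarrow> nat \<Rightarrow> real" where
  "utility_step n U k = U k - (if k < n then U (Suc k) else 0)"

lemma run_value_cong:
  "set xs \<subseteq> A \<Longrightarrow> (\<And>i. i \<in> A \<Longrightarrow> U i = V i) \<Longrightarrow>
   run_value P p U seen ds xs = run_value P p V seen ds xs"
  by (induction xs arbitrary: seen ds) (auto simp: Let_def)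

lemma run_value_sum:
  assumes "finite K"
  shows "run_value P p (\<lambda>i. \<Sum>k\<in>K. c k * f k i) seen ds xs
       = (\<Sum>k\<in>K. c k * run_value P p (f k) seen ds xs)"
proof (induction xs arbitrary: seen ds)
  case Nil
  then show ?case by simp
next
  case (Cons x rest)
  define q where "q = P (partial_ranks (seen @ [x])) ds"
  define A where "A k = run_value P p (f k) (seen @ [x]) (ds @ [True]) rest" for k
  define B where "B k = run_value P p (f k) (seen @ [x]) (ds @ [False]) rest" for k
  have "(\<Sum>k\<in>K. c k * (q * (p * f k x + (1 - p) * A k) + (1 - q) * B k))
      = (\<Sum>k\<in>K. (q * p) * (c k * f k x) + (q * (1 - p)) * (c k * A k) + (1 - q) * (c k * B k))"
    by (intro sum.cong) (auto simp: algebra_simps)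
  also have "\<dots> = (q * p) * (\<Sum>k\<in>K. c k * f k x) + (q * (1 - p)) * (\<Sum>k\<in>K. c k * A k)
                  + (1 - q) * (\<Sum>k\<in>K. c k * B k)"
    by (simp add: sum.distrib sum_distrib_left)
  finally show ?case
    by (simp add: Let_def Cons q_def[symmetric] A_def[symmetric] B_def[symmetric] algebra_simps)
qed

lemma EU_alg_sum:
  assumes "finite K"
  shows "EU_alg n p P (\<lambda>i. \<Sum>k\<in>K. c k * f k i) = (\<Sum>k\<in>K. c k * EU_alg n p P (f k))"
  unfolding EU_alg_def
  by (simp add: run_value_sum[OF assms] sum_divide_distrib sum_distrib_left sum.swap[of _ K]
        mult.assoc)

lemma EU_alg_cong:
  assumes "\<And>i. i \<in> {1..n} \<Longrightarrow> U i = V i"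
  shows "EU_alg n p P U = EU_alg n p P V"
  unfolding EU_alg_def
  by (intro arg_cong2[where f="(/)"] sum.cong refl run_value_cong[where A="{1..n}"])
     (use assms in \<open>auto dest: permutations_of_setD\<close>)

lemma EU_opt_sum:
  assumes "finite K"
  shows "EU_opt n p (\<lambda>i. \<Sum>k\<in>K. c k * f k i) = (\<Sum>k\<in>K. c k * EU_opt n p (f k))"
  unfolding EU_opt_def
  by (simp add: sum_distrib_left sum_distrib_right sum.swap[of _ K] mult.assoc)

lemma EU_opt_cong:
  assumes "\<And>i. i \<in> {1..n} \<Longrightarrow> U i = V i"
  shows "EU_opt n p U = EU_opt n p V"
  unfolding EU_opt_def using assms by (intro sum.cong) auto

lemma prob_top_eq_EU_alg_threshold: "prob_top n p P k = EU_alg n p P (threshold_utility k)"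
  by (simp add: prob_top_def threshold_utility_def[abs_def])

lemma sum_geometric_acceptance: "(\<Sum>i=1..k. p * (1 - p) ^ (i - 1)) = 1 - (1 - (p::real)) ^ k"
  by (induction k) (auto simp: algebra_simps)

lemma EU_opt_threshold:
  assumes "k \<le> n"
  shows "EU_opt n p (threshold_utility k) = 1 - (1 - p) ^ k"
proof -
  have "EU_opt n p (threshold_utility k)
      = (\<Sum>i\<in>{1..n}. if i \<le> k then p * (1 - p) ^ (i - 1) else 0)"
    unfolding EU_opt_def threshold_utility_def by (intro sum.cong) auto
  also have "\<dots> = (\<Sum>i\<in>{1..k}. p * (1 - p) ^ (i - 1))"
    by (rule sum.mono_neutral_cong_right) (use assms in auto)
  also have "\<dots> = 1 - (1 - p) ^ k"
    by (rule sum_geometric_acceptance)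
  finally show ?thesis .
qed

lemma one_minus_power_pos:
  assumes "1 \<le> k" "0 < p" "p \<le> (1::real)"
  shows "0 < 1 - (1 - p) ^ k"
proof -
  have "(1 - p) ^ k \<le> (1 - p) ^ 1"
    using assms by (intro power_decreasing) auto
  then show ?thesis using assms by simp
qed

lemma utility_eq_sum_steps:
  assumes "i \<in> {1..n}"
  shows "U i = (\<Sum>k\<in>{1..n}. utility_step n U k * threshold_utility k i)"
proof -
  define U' where "U' j = (if j \<le> n then U j else 0)" for j
  have step: "utility_step n U k = - (U' (Suc k) - U' k)" if "k \<le> n" for k
    using that by (auto simp: utility_step_def U'_def)
  have "(\<Sum>k\<in>{1..n}. utility_step n U k * threshold_utility k i) = (\<Sum>k\<in>{i..n}. utility_step n U k)"
    by (rule sum.mono_neutral_cong_right) (use assms in \<open>auto simp: threshold_utility_def\<close>)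
  also have "\<dots> = - (\<Sum>k\<in>{i..n}. U' (Suc k) - U' k)"
    unfolding sum_negf[symmetric] by (intro sum.cong) (auto simp: step)
  also have "\<dots> = U i"
    using assms by (subst sum_Suc_diff) (auto simp: U'_def)
  finally show ?thesis by simp
qed

lemma utility_step_nonneg:
  assumes "monotone_utility n U" "k \<in> {1..n}"
  shows "0 \<le> utility_step n U k"
  using assms unfolding monotone_utility_def utility_step_def by auto

lemma EU_alg_eq_sum_steps:
  "EU_alg n p P U = (\<Sum>k\<in>{1..n}. utility_step n U k * prob_top n p P k)"
  by (subst EU_alg_cong[OF utility_eq_sum_steps], assumption)
     (simp add: EU_alg_sum prob_top_eq_EU_alg_threshold)

lemma EU_opt_eq_sum_steps:
  "EU_opt n p U = (\<Sum>k\<in>{1..n}. utility_step n U k * (1 - (1 - p) ^ k))"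
  by (subst EU_opt_cong[OF utility_eq_sum_steps], assumption)
     (auto simp: EU_opt_sum EU_opt_threshold intro!: sum.cong)

lemma prob_top_ge_robust_ratio:
  assumes "k \<in> {1..n}" "0 < p" "p \<le> 1" "\<gamma> \<le> robust_ratio n p P"
  shows "\<gamma> * (1 - (1 - p) ^ k) \<le> prob_top n p P k"
proof -
  have "robust_ratio n p P \<le> prob_top n p P k / (1 - (1 - p) ^ k)"
    unfolding robust_ratio_def using assms(1) by (intro Min_le) auto
  then have "\<gamma> \<le> prob_top n p P k / (1 - (1 - p) ^ k)"
    using assms(4) by linarith
  moreover have "0 < 1 - (1 - p) ^ k"
    using assms by (intro one_minus_power_pos) auto
  ultimately show ?thesis
    by (simp add: pos_le_divide_eq)
qed

lemma EU_alg_ge_robust: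
  assumes "0 < p" "p \<le> 1" "\<gamma> \<le> robust_ratio n p P" "monotone_utility n U"
  shows "\<gamma> * EU_opt n p U \<le> EU_alg n p P U"
proof -
  have "\<gamma> * EU_opt n p U = (\<Sum>k\<in>{1..n}. utility_step n U k * (\<gamma> * (1 - (1 - p) ^ k)))"
    by (simp add: EU_opt_eq_sum_steps sum_distrib_left algebra_simps)
  also have "\<dots> \<le> (\<Sum>k\<in>{1..n}. utility_step n U k * prob_top n p P k)"
    by (intro sum_mono mult_left_mono prob_top_ge_robust_ratio utility_step_nonneg)
       (use assms in auto)
  finally show ?thesis by (simp add: EU_alg_eq_sum_steps)
qed

lemma EU_opt_pos:
  assumes "0 < p" "p \<le> 1" "monotone_utility n U" "i \<in> {1..n}" "U i \<noteq> 0"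
  shows "0 < EU_opt n p U"
proof -
  have "0 < U i" "U i \<le> U 1"
    using assms unfolding monotone_utility_def by force+
  then have "0 < U 1 * p"
    using assms(1) by (intro mult_pos_pos) auto
  moreover have "U 1 * p * (1 - p) ^ (1 - 1) \<le> EU_opt n p U"
    unfolding EU_opt_def
    by (rule member_le_sum) (use assms in \<open>auto simp: monotone_utility_def\<close>)
  ultimately show ?thesis by simp
qed

lemma monotone_threshold_utility:
  assumes "1 \<le> k"
  shows "monotone_utility n (threshold_utility k) \<and> threshold_utility k 1 \<noteq> 0"
  using assms by (auto simp: monotone_utility_def threshold_utility_def)

lemma worst_utility_ratio_eq_robust_ratio:
  assumes "1 \<le> n" "0 < p" "p \<le> 1"
  shows "worst_utility_ratio n p P = robust_ratio n p P"
proof -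
  define W where "W = {U. monotone_utility n U \<and> (\<exists>i\<in>{1..n}. U i \<noteq> 0)}"
  define ratio where "ratio U = EU_alg n p P U / EU_opt n p U" for U
  have "robust_ratio n p P \<in> (\<lambda>k. prob_top n p P k / (1 - (1 - p) ^ k)) ` {1..n}"
    unfolding robust_ratio_def using assms by (intro Min_in) auto
  then obtain k where k: "k \<in> {1..n}"
    and robust_k: "robust_ratio n p P = prob_top n p P k / (1 - (1 - p) ^ k)" by auto
  have "threshold_utility k \<in> W"
    using k assms(1) monotone_threshold_utility[of k n] unfolding W_def by auto
  moreover have "ratio (threshold_utility k) = robust_ratio n p P"
    using k by (simp add: ratio_def robust_k prob_top_eq_EU_alg_threshold EU_opt_threshold)
  ultimately have attained: "robust_ratio n p P \<in> ratio ` W"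
    by force
  have lower: "robust_ratio n p P \<le> ratio U" if "U \<in> W" for U
  proof -
    from that obtain i where "i \<in> {1..n}" "U i \<noteq> 0" "monotone_utility n U"
      unfolding W_def by auto
    then have "0 < EU_opt n p U"
      using EU_opt_pos assms(2,3) by blast
    moreover have "robust_ratio n p P * EU_opt n p U \<le> EU_alg n p P U"
      using EU_alg_ge_robust[OF assms(2,3) order.refl] \<open>monotone_utility n U\<close> .
    ultimately show ?thesis by (simp add: ratio_def pos_le_divide_eq)
  qed
  show ?thesis
    unfolding worst_utility_ratio_def W_def[symmetric] ratio_def[symmetric]
    by (rule cInf_eq_minimum[OF attained]) (auto intro: lower)
qed

lemma continuous_on_Min_image:
  assumes "finite K" "K \<noteq> {}" "\<And>k. k \<in> K \<Longrightarrow> continuous_on S (g k)"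
  shows "continuous_on S (\<lambda>x. Min ((\<lambda>k. g k x :: real) ` K))"
  using assms
proof (induction K rule: finite_ne_induct)
  case (singleton k)
  then show ?case by simp
next
  case (insert a F)
  have "continuous_on S (\<lambda>x. min (g a x) (Min ((\<lambda>k. g k x) ` F)))"
    using insert by (intro continuous_intros) auto
  then show ?case using insert by simp
qed

text \<open>Policies are identified with points of the product space of their offer probabilities.\<close>

lemma continuous_on_run_value:
  "continuous_on UNIV (\<lambda>f. run_value (\<lambda>rs ds. f (rs, ds)) p U seen ds xs)"
proof (induction xs arbitrary: seen ds)
  case Nil
  then show ?case by simp
next
  case (Cons x rest)
  show ?case
    by (simp add: Let_def) (intro continuous_intros continuous_on_product_coordinates Cons)
qed

lemma continuous_on_robust_ratio:
  assumes "1 \<le> n" "0 < p" "p \<le> 1"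
  shows "continuous_on UNIV (\<lambda>f. robust_ratio n p (curry f))"
proof -
  have "1 - (1 - p) ^ k \<noteq> 0" if "k \<in> {1..n}" for k
    using one_minus_power_pos[of k p] assms that by auto
  then show ?thesis
    unfolding robust_ratio_def prob_top_def EU_alg_def curry_conv
    by (intro continuous_on_Min_image)
       (use assms in \<open>auto intro!: continuous_intros continuous_on_run_value\<close>)
qed

lemma compact_unit_functions: "compact {f :: 'a \<Rightarrow> real. \<forall>x. f x \<in> {0..1}}"
proof -
  have "compactin (product_topology (\<lambda>_. euclidean) UNIV) (PiE (UNIV :: 'a set) (\<lambda>_. {0..1::real}))"
    by (subst compactin_PiE) auto
  moreover have "PiE (UNIV :: 'a set) (\<lambda>_. {0..1::real}) = {f. \<forall>x. f x \<in> {0..1}}"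
    by (auto simp: PiE_def)
  ultimately show ?thesis by (simp add: euclidean_product_topology)
qed

lemma robust_ratio_attains_max:
  assumes "1 \<le> n" "0 < p" "p \<le> 1"
  obtains P where "valid_policy P"
    and "\<And>Q. valid_policy Q \<Longrightarrow> robust_ratio n p Q \<le> robust_ratio n p P"
proof -
  define K where "K = {f :: nat list \<times> bool list \<Rightarrow> real. \<forall>x. f x \<in> {0..1}}"
  have "\<exists>f\<in>K. \<forall>g\<in>K. robust_ratio n p (curry g) \<le> robust_ratio n p (curry f)"
    unfolding K_def
    by (rule continuous_attains_sup[OF compact_unit_functions])
       (auto intro: continuous_on_subset[OF continuous_on_robust_ratio[OF assms]])
  then obtain f where "f \<in> K"
    and fmax: "\<And>g. g \<in> K \<Longrightarrow> robust_ratio n p (curry g) \<le> robust_ratio n p (curry f)"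
    by blast
  have "valid_policy (curry f)"
    using \<open>f \<in> K\<close> unfolding K_def valid_policy_def by auto
  moreover have "robust_ratio n p Q \<le> robust_ratio n p (curry f)" if "valid_policy Q" for Q
    using fmax[of "case_prod Q"] that unfolding K_def valid_policy_def by auto
  ultimately show ?thesis using that by blast
qed

theorem proposition1:
  fixes n :: nat and p :: real
  assumes "1 \<le> n" and "0 < p" and "p \<le> 1"
  shows "(\<forall>P \<gamma> U. valid_policy P \<longrightarrow> \<gamma> \<le> robust_ratio n p P \<longrightarrow> monotone_utility n U
            \<longrightarrow> EU_alg n p P U \<ge> \<gamma> * EU_opt n p U)
       \<and> (\<exists>P. valid_policy P \<and> worst_utility_ratio n p P = gamma_star n p
              \<and> (\<forall>Q. valid_policy Q \<longrightarrow> worst_utility_ratio n p Q \<le> gamma_star n p))"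
proof
  show "\<forall>P \<gamma> U. valid_policy P \<longrightarrow> \<gamma> \<le> robust_ratio n p P \<longrightarrow> monotone_utility n U
          \<longrightarrow> EU_alg n p P U \<ge> \<gamma> * EU_opt n p U"
    using EU_alg_ge_robust assms by blast
  obtain P where valid: "valid_policy P"
    and max: "\<And>Q. valid_policy Q \<Longrightarrow> robust_ratio n p Q \<le> robust_ratio n p P"
    using robust_ratio_attains_max[OF assms] by blast
  have "gamma_star n p = robust_ratio n p P"
    unfolding gamma_star_def by (rule cSup_eq_maximum) (use valid max in auto)
  then show "\<exists>P. valid_policy P \<and> worst_utility_ratio n p P = gamma_star n p
              \<and> (\<forall>Q. valid_policy Q \<longrightarrow> worst_utility_ratio n p Q \<le> gamma_star n p)"
    using valid max worst_utility_ratio_eq_robust_ratio[OF assms] by metis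
qed

end
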